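(* Let $H$ be a digraph (possibly with loops) and let $D$ be an $H$-colored semicomplete digraph. If $k \geq 3$, then $D$ has a $(k,H)$-kernel.
   Context: All digraphs are finite. A digraph is semicomplete if every two distinct vertices are joined by at least one arc. $D$ has no loops and comes with a map $\rho: A(D)\to V(H)$. For a walk $W=(x_0,\ldots,x_n)$ in $D$, there is an obstruction on $x_i$ if $(\rho(x_{i-1},x_i),\rho(x_i,x_{i+1})) \notin A(H)$; for an open walk this is considered at internal vertices $x_i$, $1\le i\le n-1$, for a closed walk at all $i\in\{0,\ldots,n-1\}$ with indices modulo $n$. $O_H(W)$ is the set of indices with an obstruction; the $H$-length is $l_H(W)=|O_H(W)|+1$ for open $W$ and $|O_H(W)|$ for closed $W$. A $(k,H)$-kernel ($k\ge2$) is a set $S\subseteq V(D)$ such that for every two distinct $u,v\in S$ every directed $uv$-path in $D$ has $H$-length at least $k$, and for every $x\in V(D)\setminus S$ there is a directed path from $x$ to a vertex of $S$ of $H$-length at most $k-1$. *)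

theory Defs
  imports Main
begin

definition is_dipath :: "'a set \<Rightarrow> ('a \<times> 'a) set \<Rightarrow> 'a list \<Rightarrow> bool" where
  "is_dipath V A xs \<longleftrightarrow> xs \<noteq> [] \<and> distinct xs \<and> set xs \<subseteq> V \<and>
     (\<forall>i. Suc i < length xs \<longrightarrow> (xs ! i, xs ! Suc i) \<in> A)"

definition obstructions :: "('a \<times> 'a \<Rightarrow> 'c) \<Rightarrow> ('c \<times> 'c) set \<Rightarrow> 'a list \<Rightarrow> nat set" where
  "obstructions \<rho> AH xs = {i. 1 \<le> i \<and> Suc i < length xs \<and>
     (\<rho> (xs ! (i - 1), xs ! i), \<rho> (xs ! i, xs ! Suc i)) \<notin> AH}"

definition H_length :: "('a \<times> 'a \<Rightarrow> 'c) \<Rightarrow> ('c \<times> 'c) set \<Rightarrow> 'a list \<Rightarrow> nat" where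
  "H_length \<rho> AH xs = card (obstructions \<rho> AH xs) + 1"

definition semicomplete :: "'a set \<Rightarrow> ('a \<times> 'a) set \<Rightarrow> bool" where
  "semicomplete V A \<longleftrightarrow> (\<forall>u\<in>V. \<forall>v\<in>V. u \<noteq> v \<longrightarrow> (u, v) \<in> A \<or> (v, u) \<in> A)"

definition kH_kernel ::
  "'a set \<Rightarrow> ('a \<times> 'a) set \<Rightarrow> ('c \<times> 'c) set \<Rightarrow> ('a \<times> 'a \<Rightarrow> 'c) \<Rightarrow> nat \<Rightarrow> 'a set \<Rightarrow> bool" where
  "kH_kernel V A AH \<rho> k S \<longleftrightarrow> S \<subseteq> V \<and>
     (\<forall>u\<in>S. \<forall>v\<in>S. u \<noteq> v \<longrightarrow>
        (\<forall>p. is_dipath V A p \<and> hd p = u \<and> last p = v \<longrightarrow> H_length \<rho> AH p \<ge> k)) \<and>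
     (\<forall>x\<in>V - S. \<exists>p. is_dipath V A p \<and> hd p = x \<and> last p \<in> S \<and> H_length \<rho> AH p \<le> k - 1)"

end

theory Submission
  imports Defs
begin

text \<open>A vertex of maximum in-degree in a semicomplete digraph is a king: every other vertex
  reaches it by a directed path with at most two arcs. Such a path has at most one internal
  vertex, hence \<open>H\<close>-length at most \<open>2 \<le> k - 1\<close>, so the singleton of that vertex is a
  \<open>(k,H)\<close>-kernel; the independence condition is vacuous for a singleton.\<close>

definition in_neighbours :: "('a \<times> 'a) set \<Rightarrow> 'a \<Rightarrow> 'a set" where
  "in_neighbours A v = {u. (u, v) \<in> A}"

lemma ex_max_if_finite_nonempty:
  fixes f :: "'a \<Rightarrow> 'b::linorder"
  assumes "finite S" "S \<noteq> {}"
  obtains x where "x \<in> S" "\<forall>y\<in>S. f y \<le> f x"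
proof -
  have "Max (f ` S) \<in> f ` S"
    using assms by (intro Max_in) simp_all
  then obtain x where "x \<in> S" "Max (f ` S) = f x"
    by (rule imageE)
  moreover have "\<forall>y\<in>S. f y \<le> Max (f ` S)"
    using assms(1) by simp
  ultimately show ?thesis
    using that by simp
qed

lemma finite_in_neighbours:
  assumes "finite V" "A \<subseteq> V \<times> V"
  shows "finite (in_neighbours A v)"
proof (rule finite_subset[OF _ assms(1)])
  show "in_neighbours A v \<subseteq> V"
    using assms(2) unfolding in_neighbours_def by blast
qed

lemma H_length_le_length:
  assumes "2 \<le> length xs"
  shows "H_length \<rho> AH xs \<le> length xs - 1"
proof -
  have "obstructions \<rho> AH xs \<subseteq> {1..<length xs - 1}"
    unfolding obstructions_def by auto
  then have "card (obstructions \<rho> AH xs) \<le> card {1..<length xs - 1}"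
    by (rule card_mono[rotated]) simp
  then show ?thesis
    using assms unfolding H_length_def by simp
qed

lemma is_dipath_arc:
  assumes "(x, y) \<in> A" "A \<subseteq> V \<times> V" "x \<noteq> y"
  shows "is_dipath V A [x, y]"
  using assms unfolding is_dipath_def by (auto simp: less_Suc_eq nth_Cons')

lemma is_dipath_two_arcs:
  assumes "(x, y) \<in> A" "(y, z) \<in> A" "A \<subseteq> V \<times> V" "distinct [x, y, z]"
  shows "is_dipath V A [x, y, z]"
  using assms unfolding is_dipath_def by (auto simp: less_Suc_eq nth_Cons')

lemma semicomplete_max_in_degree_king:
  assumes "finite V" "A \<subseteq> V \<times> V" "\<forall>v. (v, v) \<notin> A" "semicomplete V A"
    and "v \<in> V" and v_max: "\<forall>w\<in>V. card (in_neighbours A w) \<le> card (in_neighbours A v)"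
    and "x \<in> V" "x \<noteq> v"
  shows "(x, v) \<in> A \<or> (\<exists>y. (x, y) \<in> A \<and> (y, v) \<in> A)"
proof (rule ccontr)
  assume no_short_path: "\<not> ?thesis"
  have vx: "(v, x) \<in> A"
    using no_short_path assms(4,5,7,8) unfolding semicomplete_def by blast
  have "insert v (in_neighbours A v) \<subseteq> in_neighbours A x"
  proof
    fix y assume "y \<in> insert v (in_neighbours A v)"
    then consider "y = v" | "(y, v) \<in> A" unfolding in_neighbours_def by blast
    then show "y \<in> in_neighbours A x"
    proof cases
      case 1
      with vx show ?thesis unfolding in_neighbours_def by simp
    next
      case 2
      then have "y \<in> V" "y \<noteq> x" "(x, y) \<notin> A"
        using assms(2) no_short_path by auto
      then show ?thesis
        using assms(4,7) unfolding semicomplete_def in_neighbours_def by blast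
    qed
  qed
  then have "card (insert v (in_neighbours A v)) \<le> card (in_neighbours A x)"
    by (rule card_mono[OF finite_in_neighbours[OF assms(1,2)]])
  moreover have "v \<notin> in_neighbours A v"
    using assms(3) unfolding in_neighbours_def by simp
  ultimately have "card (in_neighbours A v) < card (in_neighbours A x)"
    using finite_in_neighbours[OF assms(1,2)] by simp
  then show False
    using v_max assms(7) by fastforce
qed

lemma king_short_dipath:
  assumes "A \<subseteq> V \<times> V" "\<forall>v. (v, v) \<notin> A" "x \<noteq> v"
    and "(x, v) \<in> A \<or> (\<exists>y. (x, y) \<in> A \<and> (y, v) \<in> A)"
  shows "\<exists>p. is_dipath V A p \<and> hd p = x \<and> last p = v \<and> H_length \<rho> AH p \<le> 2"
  using assms(4)
proof
  assume "(x, v) \<in> A"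
  then have "is_dipath V A [x, v]"
    using is_dipath_arc[OF _ assms(1,3)] by simp
  moreover have "H_length \<rho> AH [x, v] \<le> 2"
    using H_length_le_length[of "[x, v]" \<rho> AH] by simp
  ultimately show ?thesis by (intro exI[of _ "[x, v]"]) simp
next
  assume "\<exists>y. (x, y) \<in> A \<and> (y, v) \<in> A"
  then obtain y where xy: "(x, y) \<in> A" and yv: "(y, v) \<in> A" by blast
  then have "distinct [x, y, v]"
    using assms(2,3) by auto
  with xy yv have "is_dipath V A [x, y, v]"
    using is_dipath_two_arcs[OF _ _ assms(1)] by simp
  moreover have "H_length \<rho> AH [x, y, v] \<le> 2"
    using H_length_le_length[of "[x, y, v]" \<rho> AH] by simp
  ultimately show ?thesis by (intro exI[of _ "[x, y, v]"]) simp
qed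

lemma kH_kernel_singleton:
  assumes "v \<in> V"
    and "\<forall>x\<in>V - {v}. \<exists>p. is_dipath V A p \<and> hd p = x \<and> last p = v \<and> H_length \<rho> AH p \<le> k - 1"
  shows "kH_kernel V A AH \<rho> k {v}"
  using assms unfolding kH_kernel_def by auto

theorem theorem6:
  fixes V :: "'a set" and A :: "('a \<times> 'a) set"
    and VH :: "'c set" and AH :: "('c \<times> 'c) set"
    and \<rho> :: "'a \<times> 'a \<Rightarrow> 'c" and k :: nat
  assumes "finite V" and "A \<subseteq> V \<times> V" and "\<forall>v. (v, v) \<notin> A"
    and "finite VH" and "AH \<subseteq> VH \<times> VH"
    and "\<forall>a\<in>A. \<rho> a \<in> VH"
    and "semicomplete V A"
    and "k \<ge> 3"
  shows "\<exists>S. kH_kernel V A AH \<rho> k S"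
proof (cases "V = {}")
  case True
  then show ?thesis unfolding kH_kernel_def by auto
next
  case False
  with assms(1) obtain v where v: "v \<in> V"
    and v_max: "\<forall>w\<in>V. card (in_neighbours A w) \<le> card (in_neighbours A v)"
    by (rule ex_max_if_finite_nonempty)
  have "\<forall>x\<in>V - {v}. \<exists>p. is_dipath V A p \<and> hd p = x \<and> last p = v \<and> H_length \<rho> AH p \<le> k - 1"
  proof
    fix x assume "x \<in> V - {v}"
    then have x: "x \<in> V" "x \<noteq> v" by auto
    obtain p where "is_dipath V A p" "hd p = x" "last p = v" "H_length \<rho> AH p \<le> 2"
      using king_short_dipath[OF assms(2,3) x(2)
          semicomplete_max_in_degree_king[OF assms(1-3,7) v v_max x]] by blast
    with assms(8) show "\<exists>p. is_dipath V A p \<and> hd p = x \<and> last p = v \<and> H_length \<rho> AH p \<le> k - 1"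
      by (intro exI[of _ p]) simp
  qed
  then have "kH_kernel V A AH \<rho> k {v}"
    by (rule kH_kernel_singleton[OF v])
  then show ?thesis ..
qed

end
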